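(* Let $\mathcal G_x$ be a matching graph with arrival distribution $(\alpha_i)$ such that a Braess paradox occurs when the edge $\{u,v\}$ ($u,v$ distinct non-adjacent nodes) is added, i.e. $\mathbb E[Q_x]<\mathbb E[\overline{Q_x}]$, where $\overline{\mathcal G_x}$ is $\mathcal G_x$ plus the edge $\{u,v\}$ and both FCFS models are stable. Let $x$ be a node distinct from $u$ and $v$, and let $\mathcal G_{yz}$ with arrival distribution $(\beta_i)$ be obtained by decomposing $x$ into $y$ and $z$, with $\beta_y,\beta_z>0$ (not necessarily equal), $\beta_y+\beta_z=\alpha_x$, and $\beta_i=\alpha_i$ for $i\ne x$. Let $\overline{\mathcal G_{yz}}$ be $\mathcal G_{yz}$ plus the edge $\{u,v\}$. Then $\mathbb E[Q_{yz}]<\mathbb E[\overline{Q_{yz}}]$, i.e. the Braess paradox also occurs for $(\mathcal G_{yz},\beta)$.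
   Context: A matching model consists of a finite connected simple graph and an arrival distribution on its nodes with positive entries. Under FCFS, the state is the word of unmatched item classes in order of arrival; an arriving item of class $i$ deletes the oldest letter of the word that is a neighbour of $i$, and if there is none $i$ is appended. For a stable model, $\mathbb E[Q]$ is the stationary mean number of items (word length). Decomposition: given a graph $\mathcal G_x=(\mathcal V,\xi)$ with node $x$, $\mathcal G_{yz}$ has node set $(\mathcal V\setminus\{x\})\cup\{y,z\}$ with $y,z$ new nodes; edges among $\mathcal V\setminus\{x\}$ are as in $\mathcal G_x$ and each of $y$ and $z$ is adjacent exactly to the neighbours of $x$ in $\mathcal G_x$ (so $y,z$ are not adjacent). $\mathbb E[Q_x],\mathbb E[\overline{Q_x}],\mathbb E[Q_{yz}],\mathbb E[\overline{Q_{yz}}]$ denote the stationary mean numbers of items for $(\mathcal G_x,\alpha)$, $(\overline{\mathcal G_x},\alpha)$, $(\mathcal G_{yz},\beta)$, $(\overline{\mathcal G_{yz}},\beta)$ respectively. *)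

theory Defs
  imports "HOL-Probability.Probability"
begin

definition simple_graph :: "'a set \<Rightarrow> 'a set set \<Rightarrow> bool" where
  "simple_graph V E \<longleftrightarrow> finite V \<and>
     (\<forall>e\<in>E. \<exists>a b. a \<in> V \<and> b \<in> V \<and> a \<noteq> b \<and> e = {a, b})"

definition connected_graph :: "'a set \<Rightarrow> 'a set set \<Rightarrow> bool" where
  "connected_graph V E \<longleftrightarrow> V \<noteq> {} \<and>
     (\<forall>a\<in>V. \<forall>b\<in>V. (a, b) \<in> {(p, q). {p, q} \<in> E}\<^sup>*)"

text \<open>FCFS dynamics: an arriving item of class i removes the oldest letter of the
  word that is a neighbour of i; if there is none, i is appended.\<close>

definition fcfs_step :: "'a set set \<Rightarrow> 'a list \<Rightarrow> 'a \<Rightarrow> 'a list" where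
  "fcfs_step E w i =
     (let p = takeWhile (\<lambda>c. {c, i} \<notin> E) w;
          r = dropWhile (\<lambda>c. {c, i} \<notin> E) w
      in if r = [] then w @ [i] else p @ tl r)"

definition valid_word :: "'a set \<Rightarrow> 'a set set \<Rightarrow> 'a list \<Rightarrow> bool" where
  "valid_word V E w \<longleftrightarrow> set w \<subseteq> V \<and>
     (\<forall>j < length w. \<forall>k < length w. {w ! j, w ! k} \<notin> E)"

definition stationary :: "'a set \<Rightarrow> 'a set set \<Rightarrow> 'a pmf \<Rightarrow> 'a list pmf \<Rightarrow> bool" where
  "stationary V E A \<pi> \<longleftrightarrow> set_pmf \<pi> \<subseteq> {w. valid_word V E w} \<and>
     bind_pmf \<pi> (\<lambda>w. map_pmf (fcfs_step E w) A) = \<pi>"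

definition matching_model :: "'a set \<Rightarrow> 'a set set \<Rightarrow> 'a pmf \<Rightarrow> bool" where
  "matching_model V E A \<longleftrightarrow> simple_graph V E \<and> connected_graph V E \<and> set_pmf A = V"

definition stable :: "'a set \<Rightarrow> 'a set set \<Rightarrow> 'a pmf \<Rightarrow> bool" where
  "stable V E A \<longleftrightarrow> matching_model V E A \<and> (\<exists>!\<pi>. stationary V E A \<pi>)"

definition mean_items :: "'a set \<Rightarrow> 'a set set \<Rightarrow> 'a pmf \<Rightarrow> ennreal" where
  "mean_items V E A =
     (\<integral>\<^sup>+ w. ennreal (real (length w)) \<partial>measure_pmf (THE \<pi>. stationary V E A \<pi>))"

definition decomp_V :: "'a set \<Rightarrow> 'a \<Rightarrow> 'a \<Rightarrow> 'a \<Rightarrow> 'a set" where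
  "decomp_V V x y z = (V - {x}) \<union> {y, z}"

definition decomp_E :: "'a set set \<Rightarrow> 'a \<Rightarrow> 'a \<Rightarrow> 'a \<Rightarrow> 'a set set" where
  "decomp_E E x y z = {e \<in> E. x \<notin> e} \<union> {{y, n} | n. {x, n} \<in> E} \<union> {{z, n} | n. {x, n} \<in> E}"

end

theory Submission
  imports Defs
begin

text \<open>Merging y and z back into x maps the FCFS chain of the decomposed model onto the original
  one, step by step; conversely, relabelling every letter x of a word independently as y or z, with
  probabilities proportional to \<beta>_y and \<beta>_z, turns stationary distributions of the original
  chain into stationary distributions of the decomposed one. Stationary distributions of a matching
  model are unique, because the empty word is accessible from every state. Hence the stationary word
  length has the same law in both models and E[Q_yz] = E[Q_x]. Since the edge {u,v} avoids x, the
  same holds after adding it, and the Braess inequality carries over.\<close>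

lemma pmf_mult_le_pmf_bind: "pmf M x * pmf (N x) i \<le> pmf (bind_pmf M N) i"
proof -
  have "ennreal (pmf M x * pmf (N x) i) = (\<integral>\<^sup>+x'. ennreal (pmf M x') * ennreal (pmf (N x') i) * indicator {x} x' \<partial>count_space UNIV)"
    by (simp add: ennreal_mult)
  also have "\<dots> \<le> (\<integral>\<^sup>+x'. ennreal (pmf M x') * ennreal (pmf (N x') i) \<partial>count_space UNIV)"
    by (intro nn_integral_mono) (simp split: split_indicator)
  also have "\<dots> = ennreal (pmf (bind_pmf M N) i)"
    by (simp add: ennreal_pmf_bind nn_integral_measure_pmf)
  finally show ?thesis by (simp add: ennreal_le_iff)
qed

lemma pmf_le_pmf_map: "pmf M x \<le> pmf (map_pmf f M) (f x)"
proof -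
  have "measure M {x} \<le> measure M (f -` {f x})"
    by (intro measure_pmf.finite_measure_mono) auto
  then show ?thesis by (simp add: pmf_map measure_pmf_single)
qed

lemma pmf_bind_return_except:
  assumes "\<And>j. j \<noteq> x \<Longrightarrow> L j = return_pmf j"
  shows "pmf (bind_pmf \<alpha> L) i = pmf \<alpha> x * pmf (L x) i + (if i = x then 0 else pmf \<alpha> i)"
proof -
  have "ennreal (pmf (bind_pmf \<alpha> L) i)
      = (\<integral>\<^sup>+j. ennreal (pmf (L x) i) * indicator {x} j + indicator ({i} - {x}) j \<partial>\<alpha>)"
    unfolding ennreal_pmf_bind using assms by (intro nn_integral_cong) (auto split: split_indicator)
  also have "\<dots> = ennreal (pmf (L x) i) * emeasure \<alpha> {x} + emeasure \<alpha> ({i} - {x})"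
    by (simp add: nn_integral_add nn_integral_cmult_indicator)
  also have "\<dots> = ennreal (pmf \<alpha> x * pmf (L x) i + (if i = x then 0 else pmf \<alpha> i))"
    by (cases "i = x") (simp_all add: emeasure_pmf_single ennreal_mult ennreal_plus mult.commute)
  finally show ?thesis by (simp flip: ennreal_plus)
qed

lemma nn_integral_count_space_eq_if_le:
  fixes g h :: "'a \<Rightarrow> ennreal"
  assumes le: "\<And>a. g a \<le> h a"
    and total: "(\<integral>\<^sup>+a. h a \<partial>count_space UNIV) \<le> (\<integral>\<^sup>+a. g a \<partial>count_space UNIV)"
    and fin: "(\<integral>\<^sup>+a. g a \<partial>count_space UNIV) \<noteq> \<infinity>"
  shows "h = g"
proof -
  have "(\<integral>\<^sup>+a. h a - g a \<partial>count_space UNIV)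
      = (\<integral>\<^sup>+a. h a \<partial>count_space UNIV) - (\<integral>\<^sup>+a. g a \<partial>count_space UNIV)"
    using fin le by (intro nn_integral_diff) auto
  also have "\<dots> = 0" using total fin by (simp add: diff_eq_0_ennreal less_top)
  finally have "\<And>a. h a - g a = 0" by (simp add: nn_integral_0_iff_AE AE_count_space)
  then show ?thesis using le by (intro ext antisym) (auto dest: ennreal_minus_eq_0)
qed

lemma pmf_eq_if_le:
  assumes "\<And>a. pmf M a \<le> pmf N a" shows "M = N"
proof -
  have "(\<lambda>a. ennreal (pmf N a)) = (\<lambda>a. ennreal (pmf M a))"
    using assms by (intro nn_integral_count_space_eq_if_le) (simp_all add: nn_integral_pmf)
  then show ?thesis by (intro pmf_eqI) (metis ennreal_inj pmf_nonneg)
qed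

section \<open>Uniqueness of invariant distributions of Markov kernels\<close>

primrec kernel_iter :: "('b \<Rightarrow> 'b pmf) \<Rightarrow> nat \<Rightarrow> 'b \<Rightarrow> 'b pmf" where
  "kernel_iter K 0 a = return_pmf a"
| "kernel_iter K (Suc n) a = bind_pmf (K a) (kernel_iter K n)"

lemma bind_kernel_iter_invariant:
  assumes "bind_pmf \<mu> K = \<mu>" shows "bind_pmf \<mu> (kernel_iter K n) = \<mu>"
proof (induction n)
  case 0 then show ?case by (simp add: bind_return_pmf')
next
  case (Suc n)
  have step: "kernel_iter K (Suc n) = (\<lambda>a. bind_pmf (K a) (kernel_iter K n))"
    by (rule ext) simp
  have "bind_pmf \<mu> (kernel_iter K (Suc n)) = bind_pmf (bind_pmf \<mu> K) (kernel_iter K n)"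
    unfolding step by (simp add: bind_assoc_pmf)
  also have "\<dots> = \<mu>" using assms Suc.IH by simp
  finally show ?case .
qed

lemma invariant_pmf_density:
  assumes "bind_pmf \<mu> K = \<mu>"
  shows "pmf \<mu> c = (\<integral>\<^sup>+a. ennreal (pmf \<mu> a) * pmf (K a) c \<partial>count_space UNIV)"
  by (subst (1) assms[symmetric]) (simp add: ennreal_pmf_bind nn_integral_measure_pmf)

text \<open>The minimum of two invariant densities is sub-invariant, and since the kernel preserves
  total mass it is invariant.\<close>

lemma invariant_min_pmf:
  assumes inv1: "bind_pmf \<mu>1 K = \<mu>1" and inv2: "bind_pmf \<mu>2 K = \<mu>2"
  defines "m \<equiv> \<lambda>a. ennreal (min (pmf \<mu>1 a) (pmf \<mu>2 a))"
  shows "(\<integral>\<^sup>+a. m a * pmf (K a) c \<partial>count_space UNIV) = m c"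
proof -
  define mK where "mK c = (\<integral>\<^sup>+a. m a * pmf (K a) c \<partial>count_space UNIV)" for c
  have sub: "mK c \<le> m c" for c
  proof -
    have "mK c \<le> (\<integral>\<^sup>+a. ennreal (pmf \<mu> a) * pmf (K a) c \<partial>count_space UNIV)"
      if "\<And>a. min (pmf \<mu>1 a) (pmf \<mu>2 a) \<le> pmf \<mu> a" for \<mu>
      unfolding mK_def m_def using that by (auto intro!: nn_integral_mono mult_right_mono ennreal_leI)
    then have "mK c \<le> pmf \<mu>1 c" "mK c \<le> pmf \<mu>2 c"
      using invariant_pmf_density[OF inv1, of c] invariant_pmf_density[OF inv2, of c] by simp_all
    then show ?thesis by (simp add: m_def flip: min_ennreal)
  qed
  define S where "S = set_pmf \<mu>1"
  have m0: "m a = 0" if "a \<notin> S" for a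
    using that by (simp add: S_def m_def set_pmf_eq)
  have restrict: "(\<integral>\<^sup>+a. g a \<partial>count_space UNIV) = (\<integral>\<^sup>+a. g a \<partial>count_space S)"
    if "\<And>a. a \<notin> S \<Longrightarrow> g a = 0" for g :: "_ \<Rightarrow> ennreal"
    using that by (subst nn_integral_count_space_indicator) (auto intro!: nn_integral_cong split: split_indicator)
  have "(\<integral>\<^sup>+c. mK c \<partial>count_space UNIV)
      = (\<integral>\<^sup>+c. \<integral>\<^sup>+a. m a * pmf (K a) c \<partial>count_space S \<partial>count_space UNIV)"
    unfolding mK_def using m0 by (subst restrict) auto
  also have "\<dots> = (\<integral>\<^sup>+a. \<integral>\<^sup>+c. m a * pmf (K a) c \<partial>count_space UNIV \<partial>count_space S)"
    by (rule nn_integral_count_space_nn_integral) (auto simp: S_def)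
  also have "\<dots> = (\<integral>\<^sup>+a. m a \<partial>count_space UNIV)"
    using m0 by (subst restrict) (auto simp: nn_integral_cmult nn_integral_pmf)
  finally have total: "(\<integral>\<^sup>+c. mK c \<partial>count_space UNIV) = (\<integral>\<^sup>+a. m a \<partial>count_space UNIV)" .
  have "(\<integral>\<^sup>+a. m a \<partial>count_space UNIV) \<le> (\<integral>\<^sup>+a. pmf \<mu>1 a \<partial>count_space UNIV)"
    by (intro nn_integral_mono) (simp add: m_def)
  then have fin: "(\<integral>\<^sup>+a. m a \<partial>count_space UNIV) \<noteq> \<infinity>"
    by (auto simp: nn_integral_pmf top_unique)
  have "m = mK" using sub total fin by (intro nn_integral_count_space_eq_if_le) auto
  then have "mK c = m c" by simp
  then show ?thesis unfolding mK_def .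
qed

text \<open>The common part min \<mu>1 \<mu>2 is invariant, so the excess of \<mu>1 over \<mu>2 at a, carried to s,
  is an excess of \<mu>1 over \<mu>2 at s.\<close>

lemma invariant_pmf_less_at_accessible:
  assumes inv1: "bind_pmf \<mu>1 K = \<mu>1" and inv2: "bind_pmf \<mu>2 K = \<mu>2"
    and less: "pmf \<mu>2 a < pmf \<mu>1 a" and access: "pmf (kernel_iter K n a) s > 0"
  shows "pmf \<mu>2 s < pmf \<mu>1 s"
proof -
  define K' where "K' = kernel_iter K n"
  have inv1': "bind_pmf \<mu>1 K' = \<mu>1" and inv2': "bind_pmf \<mu>2 K' = \<mu>2"
    using inv1 inv2 by (simp_all add: K'_def bind_kernel_iter_invariant)
  define m where "m b = min (pmf \<mu>1 b) (pmf \<mu>2 b)" for b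
  define d where "d b = pmf \<mu>1 b - m b" for b
  have d_nonneg: "d b \<ge> 0" for b by (simp add: d_def m_def)
  define dK where "dK = (\<integral>\<^sup>+b. ennreal (d b) * pmf (K' b) s \<partial>count_space UNIV)"
  have "ennreal (pmf \<mu>1 s) = (\<integral>\<^sup>+b. ennreal (pmf \<mu>1 b) * pmf (K' b) s \<partial>count_space UNIV)"
    by (rule invariant_pmf_density[OF inv1'])
  also have "\<dots> = (\<integral>\<^sup>+b. ennreal (m b + d b) * pmf (K' b) s \<partial>count_space UNIV)"
    by (simp add: d_def)
  also have "\<dots> = (\<integral>\<^sup>+b. ennreal (m b) * pmf (K' b) s \<partial>count_space UNIV) + dK"
    using d_nonneg by (simp add: dK_def ennreal_plus m_def distrib_right nn_integral_add)
  also have "(\<integral>\<^sup>+b. ennreal (m b) * pmf (K' b) s \<partial>count_space UNIV) = m s"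
    unfolding m_def by (rule invariant_min_pmf[OF inv1' inv2'])
  finally have split: "ennreal (pmf \<mu>1 s) = m s + dK" .
  have "ennreal (d a * pmf (K' a) s)
      = (\<integral>\<^sup>+b. ennreal (d b) * pmf (K' b) s * indicator {a} b \<partial>count_space UNIV)"
    using d_nonneg by (simp add: nn_integral_indicator_singleton ennreal_mult)
  also have "\<dots> \<le> dK"
    unfolding dK_def by (intro nn_integral_mono) (simp split: split_indicator)
  finally have "ennreal (m s + d a * pmf (K' a) s) \<le> ennreal (pmf \<mu>1 s)"
    unfolding split using d_nonneg by (simp add: m_def ennreal_plus add_left_mono)
  then have "m s + d a * pmf (K' a) s \<le> pmf \<mu>1 s"
    by (simp add: ennreal_le_iff)
  moreover have "d a * pmf (K' a) s > 0"
    using less access by (simp add: d_def m_def K'_def)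
  ultimately show ?thesis by (auto simp: m_def min_def split: if_splits)
qed

lemma invariant_pmf_unique:
  assumes inv1: "bind_pmf \<mu>1 K = \<mu>1" and inv2: "bind_pmf \<mu>2 K = \<mu>2"
    and access: "\<And>a. a \<in> set_pmf \<mu>1 \<union> set_pmf \<mu>2 \<Longrightarrow> \<exists>n. pmf (kernel_iter K n a) s > 0"
  shows "\<mu>1 = \<mu>2"
proof (rule ccontr)
  assume "\<mu>1 \<noteq> \<mu>2"
  then obtain a b where a: "pmf \<mu>1 a < pmf \<mu>2 a" and b: "pmf \<mu>2 b < pmf \<mu>1 b"
    using pmf_eq_if_le by (metis not_le)
  have "a \<in> set_pmf \<mu>2" "b \<in> set_pmf \<mu>1"
    using a b by (auto simp: set_pmf_iff intro: pmf_nonneg dest: order.strict_trans1[OF pmf_nonneg])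
  then obtain na nb where "pmf (kernel_iter K na a) s > 0" "pmf (kernel_iter K nb b) s > 0"
    using access by blast
  then have "pmf \<mu>1 s < pmf \<mu>2 s" "pmf \<mu>2 s < pmf \<mu>1 s"
    using invariant_pmf_less_at_accessible[OF inv2 inv1 a] invariant_pmf_less_at_accessible[OF inv1 inv2 b]
    by auto
  then show False by simp
qed

section \<open>Stationary distributions of FCFS matching models\<close>

lemma fcfs_step_Cons_neighbour: "{c, i} \<in> E \<Longrightarrow> fcfs_step E (c # w) i = w"
  by (simp add: fcfs_step_def Let_def)

lemma fcfs_step_eq_take_drop:
  "fcfs_step E w i = (let j = length (takeWhile (\<lambda>c. {c, i} \<notin> E) w) in
     if j = length w then w @ [i] else take j w @ drop (Suc j) w)"
proof -
  define j where "j = length (takeWhile (\<lambda>c. {c, i} \<notin> E) w)"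
  have "takeWhile (\<lambda>c. {c, i} \<notin> E) w = take j w" "dropWhile (\<lambda>c. {c, i} \<notin> E) w = drop j w"
    unfolding j_def by (rule takeWhile_eq_take dropWhile_eq_drop)+
  moreover have "j \<le> length w" unfolding j_def by (rule length_takeWhile_le)
  ultimately show ?thesis
    unfolding fcfs_step_def Let_def j_def[symmetric] by (auto simp: tl_drop drop_Suc)
qed

text \<open>Every letter can be matched by an arrival of positive probability, so the empty word is
  reached from w in length w steps by matching the letters of w one after another.\<close>

lemma fcfs_empty_accessible:
  assumes nb: "\<And>c. c \<in> V \<Longrightarrow> \<exists>n. {c, n} \<in> E \<and> pmf A n > 0" and w: "set w \<subseteq> V"
  shows "pmf (kernel_iter (\<lambda>w. map_pmf (fcfs_step E w) A) (length w) w) [] > 0"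
  using w
proof (induction w)
  case Nil then show ?case by simp
next
  case (Cons c w)
  define K where "K = (\<lambda>w. map_pmf (fcfs_step E w) A)"
  obtain n where n: "{c, n} \<in> E" "pmf A n > 0" using nb Cons.prems by auto
  have "0 < pmf (K (c # w)) w"
    using pmf_le_pmf_map[of A n "fcfs_step E (c # w)"] n by (simp add: K_def fcfs_step_Cons_neighbour)
  then have "0 < pmf (K (c # w)) w * pmf (kernel_iter K (length w) w) []"
    using Cons by (simp add: K_def)
  also have "\<dots> \<le> pmf (kernel_iter K (length (c # w)) (c # w)) []"
    by (simp add: pmf_mult_le_pmf_bind)
  finally show ?case by (simp add: K_def)
qed

lemma fcfs_stationary_unique:
  assumes nb: "\<And>c. c \<in> V \<Longrightarrow> \<exists>n. {c, n} \<in> E \<and> pmf A n > 0"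
    and "stationary V E A \<mu>1" "stationary V E A \<mu>2"
  shows "\<mu>1 = \<mu>2"
proof (rule invariant_pmf_unique)
  show "bind_pmf \<mu>1 (\<lambda>w. map_pmf (fcfs_step E w) A) = \<mu>1"
    "bind_pmf \<mu>2 (\<lambda>w. map_pmf (fcfs_step E w) A) = \<mu>2"
    using assms by (simp_all add: stationary_def)
  fix w assume "w \<in> set_pmf \<mu>1 \<union> set_pmf \<mu>2"
  then have "set w \<subseteq> V" using assms by (auto simp: stationary_def valid_word_def)
  then show "\<exists>n. pmf (kernel_iter (\<lambda>w. map_pmf (fcfs_step E w) A) n w) [] > 0"
    using fcfs_empty_accessible[OF nb] by blast
qed

lemma simple_graph_edge: "simple_graph V E \<Longrightarrow> {a, b} \<in> E \<Longrightarrow> a \<in> V \<and> b \<in> V \<and> a \<noteq> b"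
  unfolding simple_graph_def by (metis doubleton_eq_iff)

lemma connected_graph_neighbour:
  assumes "simple_graph V E" "connected_graph V E" "c \<in> V" "d \<in> V" "d \<noteq> c"
  obtains n where "{c, n} \<in> E" "n \<in> V"
proof -
  have "(c, d) \<in> {(p, q). {p, q} \<in> E}\<^sup>*" using assms by (auto simp: connected_graph_def)
  then obtain n where "{c, n} \<in> E" using assms(5) by (auto elim: converse_rtranclE)
  then show thesis using that simple_graph_edge[OF assms(1)] by blast
qed

lemma stable_if_stationary:
  assumes mm: "matching_model V E A" and cd: "c \<in> V" "d \<in> V" "c \<noteq> d"
    and st: "stationary V E A \<pi>"
  shows "stable V E A"
proof -
  have sg: "simple_graph V E" and cg: "connected_graph V E" and A: "set_pmf A = V"
    using mm by (auto simp: matching_model_def)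
  have "\<exists>n. {c', n} \<in> E \<and> pmf A n > 0" if c': "c' \<in> V" for c'
  proof -
    obtain d' where "d' \<in> V" "d' \<noteq> c'" using cd by blast
    then obtain n where "{c', n} \<in> E" "n \<in> V" using connected_graph_neighbour[OF sg cg c'] by blast
    then show ?thesis using A by (auto simp: pmf_positive)
  qed
  then have "\<mu>1 = \<mu>2" if "stationary V E A \<mu>1" "stationary V E A \<mu>2" for \<mu>1 \<mu>2
    using fcfs_stationary_unique that by blast
  then show ?thesis using mm st by (auto simp: stable_def)
qed

section \<open>Lifting an FCFS matching model\<close>

primrec lift_word :: "('a \<Rightarrow> 'b pmf) \<Rightarrow> 'a list \<Rightarrow> 'b list pmf" where
  "lift_word L [] = return_pmf []"
| "lift_word L (c # w) = bind_pmf (L c) (\<lambda>l. map_pmf (Cons l) (lift_word L w))"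

lemma lift_word_delete:
  "j < length w \<Longrightarrow>
   map_pmf (\<lambda>a. take j a @ drop (Suc j) a) (lift_word L w) = lift_word L (take j w @ drop (Suc j) w)"
proof (induction w arbitrary: j)
  case Nil then show ?case by simp
next
  case (Cons c w)
  then show ?case
    by (cases j) (simp_all add: map_bind_pmf map_pmf_comp o_def flip: Cons.IH)
qed

lemma lift_word_snoc:
  "lift_word L (w @ [i]) = bind_pmf (lift_word L w) (\<lambda>a. map_pmf (\<lambda>l. a @ [l]) (L i))"
proof (induction w)
  case Nil then show ?case
    by (simp add: bind_return_pmf map_bind_pmf map_pmf_comp o_def bind_return_pmf' flip: map_pmf_def)
next
  case (Cons c w)
  then show ?case by (simp add: map_bind_pmf bind_map_pmf map_pmf_comp o_def bind_assoc_pmf)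
qed

locale fcfs_lift =
  fixes V :: "'a set" and E :: "'a set set" and V' :: "'b set" and E' :: "'b set set"
    and proj :: "'b \<Rightarrow> 'a" and \<alpha> :: "'a pmf" and \<beta> :: "'b pmf" and L :: "'a \<Rightarrow> 'b pmf"
  assumes edge_iff: "\<And>c d. c \<in> V' \<Longrightarrow> d \<in> V' \<Longrightarrow> {c, d} \<in> E' \<longleftrightarrow> {proj c, proj d} \<in> E"
    and proj_in: "\<And>c. c \<in> V' \<Longrightarrow> proj c \<in> V"
    and set_pmf_L: "\<And>i. i \<in> V \<Longrightarrow> set_pmf (L i) \<subseteq> V' \<inter> proj -` {i}"
    and arrival_lift: "\<beta> = bind_pmf \<alpha> L"
    and set_pmf_arrival: "set_pmf \<alpha> \<subseteq> V"
begin

lemma fcfs_step_lift: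
  assumes a: "set a \<subseteq> V'" and i: "i \<in> V'"
  shows "fcfs_step E' a i = (let j = length (takeWhile (\<lambda>c. {c, proj i} \<notin> E) (map proj a)) in
     if j = length a then a @ [i] else take j a @ drop (Suc j) a)"
proof -
  have "takeWhile (\<lambda>c. {c, i} \<notin> E') a = takeWhile (\<lambda>c. {proj c, proj i} \<notin> E) a"
    using a i edge_iff by (intro takeWhile_cong) auto
  then have "length (takeWhile (\<lambda>c. {c, i} \<notin> E') a)
      = length (takeWhile (\<lambda>c. {c, proj i} \<notin> E) (map proj a))"
    by (simp add: takeWhile_map o_def)
  then show ?thesis by (simp add: fcfs_step_eq_take_drop[of E' a i] Let_def)
qed

lemma map_proj_fcfs_step:
  "set a \<subseteq> V' \<Longrightarrow> i \<in> V' \<Longrightarrow> map proj (fcfs_step E' a i) = fcfs_step E (map proj a) (proj i)"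
  using fcfs_step_lift by (simp add: fcfs_step_eq_take_drop[of E "map proj a"] Let_def take_map drop_map)

lemma valid_word_map_proj: "valid_word V' E' a \<Longrightarrow> valid_word V E (map proj a)"
  unfolding valid_word_def using proj_in edge_iff by (auto simp: subset_iff)

lemma map_pmf_proj_arrival: "map_pmf proj \<beta> = \<alpha>"
proof -
  have "map_pmf proj (L i) = return_pmf i" if "i \<in> set_pmf \<alpha>" for i
  proof -
    have "map_pmf proj (L i) = map_pmf (\<lambda>_. i) (L i)"
      using that set_pmf_arrival set_pmf_L by (intro map_pmf_cong) auto
    then show ?thesis by simp
  qed
  then have "map_pmf proj \<beta> = bind_pmf \<alpha> return_pmf"
    unfolding arrival_lift map_bind_pmf by (intro bind_pmf_cong) auto
  then show ?thesis by (simp add: bind_return_pmf')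
qed

lemma set_pmf_lifted_arrival: "set_pmf \<beta> \<subseteq> V'"
  using set_pmf_L set_pmf_arrival by (auto simp: arrival_lift)

lemma stationary_map_proj:
  assumes st: "stationary V' E' \<beta> \<mu>"
  shows "stationary V E \<alpha> (map_pmf (map proj) \<mu>)"
  unfolding stationary_def
proof
  show "set_pmf (map_pmf (map proj) \<mu>) \<subseteq> {w. valid_word V E w}"
    using st valid_word_map_proj by (auto simp: stationary_def)
  have "bind_pmf (map_pmf (map proj) \<mu>) (\<lambda>w. map_pmf (fcfs_step E w) \<alpha>)
     = bind_pmf \<mu> (\<lambda>a. map_pmf (fcfs_step E (map proj a)) (map_pmf proj \<beta>))"
    by (simp add: bind_map_pmf map_pmf_proj_arrival)
  also have "\<dots> = bind_pmf \<mu> (\<lambda>a. map_pmf (map proj) (map_pmf (fcfs_step E' a) \<beta>))"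
  proof (intro bind_pmf_cong refl)
    fix a assume "a \<in> set_pmf \<mu>"
    then have "set a \<subseteq> V'" using st by (auto simp: stationary_def valid_word_def)
    then show "map_pmf (fcfs_step E (map proj a)) (map_pmf proj \<beta>)
        = map_pmf (map proj) (map_pmf (fcfs_step E' a) \<beta>)"
      unfolding map_pmf_comp using map_proj_fcfs_step set_pmf_lifted_arrival
      by (intro map_pmf_cong) auto
  qed
  also have "\<dots> = map_pmf (map proj) \<mu>"
    using st by (simp add: stationary_def flip: map_bind_pmf)
  finally show "bind_pmf (map_pmf (map proj) \<mu>) (\<lambda>w. map_pmf (fcfs_step E w) \<alpha>) = map_pmf (map proj) \<mu>" .
qed

lemma set_pmf_lift_word:
  "set w \<subseteq> V \<Longrightarrow> a \<in> set_pmf (lift_word L w) \<Longrightarrow> map proj a = w \<and> set a \<subseteq> V'"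
proof (induction w arbitrary: a)
  case Nil then show ?case by simp
next
  case (Cons c w)
  then show ?case using set_pmf_L[of c] by (auto simp: subset_iff)
qed

lemma valid_word_lift:
  assumes w: "valid_word V E w" and a: "a \<in> set_pmf (lift_word L w)"
  shows "valid_word V' E' a"
proof -
  have "set w \<subseteq> V" using w by (simp add: valid_word_def)
  then have pa: "map proj a = w" and sa: "set a \<subseteq> V'"
    using set_pmf_lift_word a by blast+
  show ?thesis unfolding valid_word_def
  proof (intro conjI sa allI impI)
    fix j k assume "j < length a" "k < length a"
    then show "{a ! j, a ! k} \<notin> E'" using w pa sa edge_iff[of "a ! j" "a ! k"]
      by (auto simp: valid_word_def) (metis nth_map nth_mem subsetD length_map)
  qed
qed

text \<open>Relabelling the letters of a word independently commutes with one FCFS step: in both models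
  the arriving item matches the letter at the same position.\<close>

lemma lift_word_fcfs_step:
  assumes w: "set w \<subseteq> V" and i: "i \<in> V"
  shows "bind_pmf (lift_word L w) (\<lambda>a. map_pmf (fcfs_step E' a) (L i)) = lift_word L (fcfs_step E w i)"
proof -
  define j where "j = length (takeWhile (\<lambda>c. {c, i} \<notin> E) w)"
  have step: "fcfs_step E' a i' = (if j = length w then a @ [i'] else take j a @ drop (Suc j) a)"
    if "a \<in> set_pmf (lift_word L w)" "i' \<in> set_pmf (L i)" for a i'
  proof -
    have a: "map proj a = w" "set a \<subseteq> V'" using set_pmf_lift_word[OF w that(1)] by auto
    have i': "i' \<in> V'" "proj i' = i" using set_pmf_L[OF i] that(2) by auto
    have "length a = length w" using a(1) by auto
    then show ?thesis using fcfs_step_lift[OF a(2) i'(1)] a i' by (simp add: j_def Let_def)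
  qed
  have "bind_pmf (lift_word L w) (\<lambda>a. map_pmf (fcfs_step E' a) (L i))
      = bind_pmf (lift_word L w) (\<lambda>a. map_pmf (\<lambda>i'. if j = length w then a @ [i'] else take j a @ drop (Suc j) a) (L i))"
    using step by (intro bind_pmf_cong refl map_pmf_cong) auto
  also have "\<dots> = lift_word L (fcfs_step E w i)"
  proof (cases "j = length w")
    case True
    then show ?thesis by (simp add: fcfs_step_eq_take_drop[of E w i] j_def[symmetric] lift_word_snoc)
  next
    case False
    then have "j < length w" unfolding j_def using length_takeWhile_le le_neq_implies_less by blast
    then show ?thesis using False
      by (simp add: fcfs_step_eq_take_drop[of E w i] j_def[symmetric] lift_word_delete[symmetric] map_pmf_def)
  qed
  finally show ?thesis .
qed

lemma stationary_lift:
  assumes st: "stationary V E \<alpha> \<pi>"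
  shows "stationary V' E' \<beta> (bind_pmf \<pi> (lift_word L))"
  unfolding stationary_def
proof
  show "set_pmf (bind_pmf \<pi> (lift_word L)) \<subseteq> {w. valid_word V' E' w}"
    using st valid_word_lift by (auto simp: stationary_def)
  have "bind_pmf (bind_pmf \<pi> (lift_word L)) (\<lambda>w. map_pmf (fcfs_step E' w) \<beta>)
      = bind_pmf \<pi> (\<lambda>w. bind_pmf \<alpha> (\<lambda>i. bind_pmf (lift_word L w) (\<lambda>a. map_pmf (fcfs_step E' a) (L i))))"
    by (simp add: bind_assoc_pmf arrival_lift map_bind_pmf bind_commute_pmf[of "lift_word L _" \<alpha>])
  also have "\<dots> = bind_pmf \<pi> (\<lambda>w. bind_pmf \<alpha> (\<lambda>i. lift_word L (fcfs_step E w i)))"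
  proof (intro bind_pmf_cong refl)
    fix w i assume "w \<in> set_pmf \<pi>" "i \<in> set_pmf \<alpha>"
    moreover from this have "set w \<subseteq> V" using st by (auto simp: stationary_def valid_word_def)
    ultimately show "bind_pmf (lift_word L w) (\<lambda>a. map_pmf (fcfs_step E' a) (L i)) = lift_word L (fcfs_step E w i)"
      using set_pmf_arrival lift_word_fcfs_step by auto
  qed
  also have "\<dots> = bind_pmf (bind_pmf \<pi> (\<lambda>w. map_pmf (fcfs_step E w) \<alpha>)) (lift_word L)"
    by (simp add: bind_assoc_pmf bind_map_pmf)
  also have "\<dots> = bind_pmf \<pi> (lift_word L)" using st by (simp add: stationary_def)
  finally show "bind_pmf (bind_pmf \<pi> (lift_word L)) (\<lambda>w. map_pmf (fcfs_step E' w) \<beta>) = bind_pmf \<pi> (lift_word L)" .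
qed

lemma mean_items_lift:
  assumes "stable V E \<alpha>" "stable V' E' \<beta>"
  shows "mean_items V' E' \<beta> = mean_items V E \<alpha>"
proof -
  define \<mu> where "\<mu> = (THE \<mu>. stationary V' E' \<beta> \<mu>)"
  have "stationary V' E' \<beta> \<mu>" unfolding \<mu>_def using assms(2) by (simp add: stable_def theI')
  then have "(THE \<pi>. stationary V E \<alpha> \<pi>) = map_pmf (map proj) \<mu>"
    using assms(1) stationary_map_proj by (auto simp: stable_def intro: the1_equality)
  then show ?thesis by (simp add: mean_items_def \<mu>_def)
qed

end

section \<open>Decomposition of a node\<close>

definition decomp_proj :: "'a \<Rightarrow> 'a \<Rightarrow> 'a \<Rightarrow> 'a \<Rightarrow> 'a" where
  "decomp_proj x y z c = (if c = y \<or> c = z then x else c)"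

locale decomposition =
  fixes V :: "'a set" and E :: "'a set set" and x y z :: 'a
  assumes simple: "simple_graph V E" and x_in: "x \<in> V"
    and y_notin: "y \<notin> V" and z_notin: "z \<notin> V" and y_ne_z: "y \<noteq> z"
begin

abbreviation "V' \<equiv> decomp_V V x y z"
abbreviation "E' \<equiv> decomp_E E x y z"
abbreviation "proj \<equiv> decomp_proj x y z"

lemma decomp_E_iff:
  assumes "c \<in> V'" "d \<in> V'"
  shows "{c, d} \<in> E' \<longleftrightarrow> {proj c, proj d} \<in> E"
proof -
  have "{x, x} \<notin> E" "\<And>n. {y, n} \<notin> E" "\<And>n. {z, n} \<notin> E"
    using simple_graph_edge[OF simple] y_notin z_notin by blast+
  then show ?thesis
    using assms x_in y_notin z_notin simple_graph_edge[OF simple]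
    unfolding decomp_E_def decomp_V_def decomp_proj_def
    by (auto simp: doubleton_eq_iff insert_commute)
qed

lemma proj_in: "c \<in> V' \<Longrightarrow> proj c \<in> V"
  using x_in by (auto simp: decomp_V_def decomp_proj_def)

lemma simple_graph_decomp: "simple_graph V' E'"
  unfolding simple_graph_def
proof (intro conjI ballI)
  show "finite V'" using simple by (simp add: simple_graph_def decomp_V_def)
  fix e assume "e \<in> E'"
  then consider "e \<in> E" "x \<notin> e" | n where "e = {y, n}" "{x, n} \<in> E" | n where "e = {z, n}" "{x, n} \<in> E"
    by (auto simp: decomp_E_def)
  then show "\<exists>a b. a \<in> V' \<and> b \<in> V' \<and> a \<noteq> b \<and> e = {a, b}"
  proof cases
    case 1
    then obtain a b where "a \<in> V" "b \<in> V" "a \<noteq> b" "e = {a, b}"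
      using simple unfolding simple_graph_def by blast
    then show ?thesis using 1 by (auto simp: decomp_V_def)
  qed (use simple_graph_edge[OF simple] y_notin z_notin in \<open>fastforce simp: decomp_V_def\<close>)+
qed

text \<open>A path in E is copied into E' by renaming x to y; z is joined to y through any neighbour of x.\<close>

lemma connected_graph_decomp:
  assumes connected: "connected_graph V E" and w: "w \<in> V" "w \<noteq> x"
  shows "connected_graph V' E'"
proof -
  define R' where "R' = {(p, q). {p, q} \<in> E'}"
  define g where "g c = (if c = x then y else c)" for c
  have g: "g c \<in> V'" "proj (g c) = c" if "c \<in> V" for c
    using that y_notin z_notin by (auto simp: g_def decomp_V_def decomp_proj_def)
  have path: "(g a, g b) \<in> R'\<^sup>*" if "(a, b) \<in> {(p, q). {p, q} \<in> E}\<^sup>*" for a b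
    using that
  proof (induction rule: rtrancl_induct)
    case (step b c)
    then have "{b, c} \<in> E" "b \<in> V" "c \<in> V" using simple_graph_edge[OF simple] by auto
    then have "(g b, g c) \<in> R'" using decomp_E_iff g by (simp add: R'_def)
    then show ?case using step.IH by (meson rtrancl_into_rtrancl)
  qed simp
  obtain n where n: "{x, n} \<in> E" "n \<in> V" using connected_graph_neighbour[OF simple connected x_in w] .
  have "n \<noteq> x" using simple_graph_edge[OF simple n(1)] by blast
  then have "n \<in> V'" "proj n = n" using n y_notin z_notin by (auto simp: decomp_V_def decomp_proj_def)
  then have "(z, n) \<in> R'" "(n, y) \<in> R'"
    using decomp_E_iff[of z n] decomp_E_iff[of n y] n(1) y_ne_z
    by (auto simp: R'_def decomp_V_def decomp_proj_def insert_commute)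
  then have to_g: "(c, g (proj c)) \<in> R'\<^sup>*" if "c \<in> V'" for c
    using that y_notin z_notin
    by (auto simp: g_def decomp_proj_def decomp_V_def intro: converse_rtrancl_into_rtrancl)
  have sym: "sym (R'\<^sup>*)" by (rule sym_rtrancl) (auto simp: R'_def sym_def insert_commute)
  show ?thesis
    unfolding connected_graph_def R'_def[symmetric]
  proof (intro conjI ballI)
    show "V' \<noteq> {}" by (simp add: decomp_V_def)
    fix a b assume "a \<in> V'" "b \<in> V'"
    then have "(g (proj a), g (proj b)) \<in> R'\<^sup>*"
      using connected proj_in path by (auto simp: connected_graph_def)
    then show "(a, b) \<in> R'\<^sup>*"
      using to_g[OF \<open>a \<in> V'\<close>] to_g[OF \<open>b \<in> V'\<close>] sym by (meson rtrancl_trans symD)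
  qed
qed

lemma arrival_decomp:
  assumes \<alpha>: "set_pmf \<alpha> = V" and \<beta>: "set_pmf \<beta> = V'"
    and \<beta>_yz: "pmf \<beta> y + pmf \<beta> z = pmf \<alpha> x"
    and \<beta>_other: "\<And>i. i \<in> V \<Longrightarrow> i \<noteq> x \<Longrightarrow> pmf \<beta> i = pmf \<alpha> i"
  shows "\<beta> = bind_pmf \<alpha> (\<lambda>i. if i = x then cond_pmf \<beta> {y, z} else return_pmf i)"
proof (rule pmf_eqI)
  fix i
  have "set_pmf \<beta> \<inter> {y, z} \<noteq> {}" using \<beta> by (auto simp: decomp_V_def)
  moreover have "measure \<beta> {y, z} = pmf \<alpha> x" using \<beta>_yz y_ne_z by (simp add: measure_measure_pmf_finite)
  moreover have "pmf \<alpha> x \<noteq> 0" using \<alpha> x_in by (simp add: pmf_eq_0_set_pmf)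
  ultimately have cond: "pmf \<alpha> x * pmf (cond_pmf \<beta> {y, z}) i = (if i \<in> {y, z} then pmf \<beta> i else 0)"
    by (simp add: pmf_cond)
  have "pmf (bind_pmf \<alpha> (\<lambda>i. if i = x then cond_pmf \<beta> {y, z} else return_pmf i)) i
      = pmf \<alpha> x * pmf (cond_pmf \<beta> {y, z}) i + (if i = x then 0 else pmf \<alpha> i)"
    by (subst pmf_bind_return_except) auto
  also have "\<dots> = pmf \<beta> i"
  proof -
    have \<alpha>_out: "pmf \<alpha> j = 0" if "j \<notin> V" for j using that \<alpha> by (simp add: pmf_eq_0_set_pmf)
    have \<beta>_out: "pmf \<beta> j = 0" if "j \<notin> V'" for j using that \<beta> by (simp add: pmf_eq_0_set_pmf)
    consider "i = x" | "i \<in> {y, z}" | "i \<in> V" "i \<noteq> x" | "i \<notin> V" "i \<notin> {y, z}" by blast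
    then show ?thesis
      unfolding cond
      by cases (use \<alpha>_out \<beta>_out \<beta>_other x_in y_notin z_notin in \<open>auto simp: decomp_V_def\<close>)
  qed
  finally show "pmf \<beta> i = pmf (bind_pmf \<alpha> (\<lambda>i. if i = x then cond_pmf \<beta> {y, z} else return_pmf i)) i" ..
qed

lemma fcfs_lift_decomp:
  assumes \<alpha>: "set_pmf \<alpha> = V" and \<beta>: "set_pmf \<beta> = V'"
    and \<beta>_yz: "pmf \<beta> y + pmf \<beta> z = pmf \<alpha> x"
    and \<beta>_other: "\<And>i. i \<in> V \<Longrightarrow> i \<noteq> x \<Longrightarrow> pmf \<beta> i = pmf \<alpha> i"
  shows "fcfs_lift V E V' E' proj \<alpha> \<beta> (\<lambda>i. if i = x then cond_pmf \<beta> {y, z} else return_pmf i)"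
proof
  have "set_pmf \<beta> \<inter> {y, z} \<noteq> {}" using \<beta> by (auto simp: decomp_V_def)
  then show "set_pmf (if i = x then cond_pmf \<beta> {y, z} else return_pmf i) \<subseteq> V' \<inter> proj -` {i}"
    if "i \<in> V" for i
    using that y_notin z_notin by (auto simp: decomp_V_def decomp_proj_def)
qed (use decomp_E_iff proj_in arrival_decomp[OF assms] \<alpha> in auto)

lemma stable_decomp:
  assumes stable: "stable V E \<alpha>" and w: "w \<in> V" "w \<noteq> x" and \<beta>: "set_pmf \<beta> = V'"
    and \<beta>_yz: "pmf \<beta> y + pmf \<beta> z = pmf \<alpha> x"
    and \<beta>_other: "\<And>i. i \<in> V \<Longrightarrow> i \<noteq> x \<Longrightarrow> pmf \<beta> i = pmf \<alpha> i"
  shows "stable V' E' \<beta> \<and> mean_items V' E' \<beta> = mean_items V E \<alpha>"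
proof -
  have connected: "connected_graph V E" and \<alpha>: "set_pmf \<alpha> = V"
    using stable by (auto simp: stable_def matching_model_def)
  interpret fcfs_lift V E V' E' proj \<alpha> \<beta> "\<lambda>i. if i = x then cond_pmf \<beta> {y, z} else return_pmf i"
    using fcfs_lift_decomp[OF \<alpha> \<beta> \<beta>_yz \<beta>_other] .
  have "matching_model V' E' \<beta>"
    using simple_graph_decomp connected_graph_decomp[OF connected w] \<beta> by (simp add: matching_model_def)
  moreover obtain \<pi> where "stationary V E \<alpha> \<pi>" using stable by (auto simp: stable_def)
  ultimately have "stable V' E' \<beta>"
    using stable_if_stationary[of V' E' \<beta> y z] stationary_lift y_ne_z by (auto simp: decomp_V_def)
  then show ?thesis using mean_items_lift stable by blast
qed

end

lemma decomp_E_insert: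
  "x \<notin> e \<Longrightarrow> decomp_E (insert e E) x y z = insert e (decomp_E E x y z)"
  unfolding decomp_E_def by (auto simp: doubleton_eq_iff)

theorem mainTheorem13:
  fixes V :: "'a set" and E :: "'a set set" and \<alpha> \<beta> :: "'a pmf" and u v x y z :: 'a
  assumes model: "matching_model V E \<alpha>"
    and uv: "u \<in> V" "v \<in> V" "u \<noteq> v" "{u, v} \<notin> E"
    and stab: "stable V E \<alpha>" "stable V (insert {u, v} E) \<alpha>"
    and braess: "mean_items V E \<alpha> < mean_items V (insert {u, v} E) \<alpha>"
    and x: "x \<in> V" "x \<noteq> u" "x \<noteq> v"
    and yz: "y \<notin> V" "z \<notin> V" "y \<noteq> z"
    and beta_supp: "set_pmf \<beta> = decomp_V V x y z"
    and beta_yz: "pmf \<beta> y > 0" "pmf \<beta> z > 0" "pmf \<beta> y + pmf \<beta> z = pmf \<alpha> x"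
    and beta_other: "\<And>i. i \<in> V \<Longrightarrow> i \<noteq> x \<Longrightarrow> pmf \<beta> i = pmf \<alpha> i"
  shows "stable (decomp_V V x y z) (decomp_E E x y z) \<beta>
       \<and> stable (decomp_V V x y z) (insert {u, v} (decomp_E E x y z)) \<beta>
       \<and> mean_items (decomp_V V x y z) (decomp_E E x y z) \<beta>
           < mean_items (decomp_V V x y z) (insert {u, v} (decomp_E E x y z)) \<beta>"
proof -
  have "simple_graph V E" "simple_graph V (insert {u, v} E)"
    using stab by (simp_all add: stable_def matching_model_def)
  then interpret G: decomposition V E x y z
    + G_uv: decomposition V "insert {u, v} E" x y z
    using x yz by (simp_all add: decomposition_def)
  \<comment> \<open>u serves as a second node of V, which gives x a neighbour.\<close>
  have "u \<noteq> x" using x by blast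
  note decomp = G.stable_decomp[OF stab(1) uv(1) this beta_supp beta_yz(3) beta_other]
    G_uv.stable_decomp[OF stab(2) uv(1) this beta_supp beta_yz(3) beta_other]
  show ?thesis using decomp braess decomp_E_insert[of x "{u, v}" E y z] x by simp
qed

end
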